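(* Let $K,L$ be Henselian valued fields of characteristic zero such that $K$ is an $\mathcal{L}_{\mathrm{val}}$-substructure of $L$, i.e. $K$ is a subfield of $L$ and $\mathcal{O}_K=K\cap\mathcal{O}_L$. Then for every positive integer $N$ the inclusion $K\hookrightarrow L$ induces an injective map $\mathrm{RV}_{N,K}\hookrightarrow\mathrm{RV}_{N,L}$, and with these identifications $K$ (with its natural $\mathcal{L}_{\mathrm{RV}}$-structure) is an $\mathcal{L}_{\mathrm{RV}}$-substructure of $L$.
   Context: For a valued field $K$ with valuation ring $\mathcal{O}_K$, maximal ideal $\mathcal{M}_K$, valuation $\mathrm{ord}$, and $N\ge1$: $\mathrm{RV}_{N,K}=K^\times/(1+N\mathcal{M}_K)\cup\{0\}$, $\mathrm{rv}_N\colon K\to\mathrm{RV}_{N,K}$ the projection with $\mathrm{rv}_N(0)=0$, and $\mathrm{rv}_{N,M}\colon\mathrm{RV}_{M,K}\to\mathrm{RV}_{N,K}$ the induced maps for $N\mid M$. The language $\mathcal{L}_{\mathrm{val}}=\{0,1,+,-,\cdot,\mathcal{O}\}$ with $\mathcal{O}$ interpreted as $\mathcal{O}_K$. The multisorted language $\mathcal{L}_{\mathrm{RV}}$ (sorts $\mathrm{VF}$, $\mathrm{RV}_N$) consists of the ring language on $\mathrm{VF}$; on each $\mathrm{RV}_N$: constants $0$ and $1=\mathrm{rv}_N(1)$, multiplication (group multiplication of $K^\times/(1+N\mathcal{M}_K)$ extended by $0$), the binary relation $\mathrm{rv}_N(x)\mid\mathrm{rv}_N(y)\Leftrightarrow\mathrm{ord}\,x\le\mathrm{ord}\,y$,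 the ternary relation $\oplus(\xi_1,\xi_2,\xi_3)$ meaning there exist $x_i\in K$ with $\mathrm{rv}_N(x_i)=\xi_i$ and $x_1+x_2=x_3$; the maps $\mathrm{rv}_N$, $\mathrm{rv}_{N,M}$; and relations $P_{N,d}\subseteq\mathrm{RV}_N\times\mathrm{RV}_{N^2}^{d+1}$ where $P_{N,d}(\xi,\zeta_0,\dots,\zeta_d)$ holds iff $\xi\in\mathrm{RV}_N^\times$ and, for some (equivalently all) $a_i\in K$ with $\mathrm{rv}_{N^2}(a_i)=\zeta_i$: (i) every element of $\{\mathrm{rv}_N(\sum_{i=1}^d y_i)\mid y_i\in K,\ \mathrm{rv}_N(y_i)=\mathrm{rv}_N(ia_i)\xi^{i-1}\}$ has order $\le\min_{1\le i\le d}\mathrm{ord}(a_i\xi^{i-1})+\mathrm{ord}\,N$, and (ii) there is $\tilde\xi\in\mathrm{RV}_{N^2}$ with $\mathrm{rv}_N(\tilde\xi)=\xi$ and $\sum_{i=0}^d y_i=0$ for some $y_i\in K$ with $\mathrm{rv}_{N^2}(y_i)=\mathrm{rv}_{N^2}(a_i)\tilde\xi^i$. *)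

theory Defs
  imports "HOL-Computational_Algebra.Polynomial"
begin

text \<open>A valued field is represented by a subfield F of an ambient field (type 'a)
  together with its valuation ring R (a subset of F).  The ambient field L itself is
  F = UNIV.\<close>

definition subfield :: "'a::field set \<Rightarrow> bool" where
  "subfield F \<longleftrightarrow> 0 \<in> F \<and> 1 \<in> F \<and>
     (\<forall>x\<in>F. \<forall>y\<in>F. x + y \<in> F \<and> x - y \<in> F \<and> x * y \<in> F) \<and>
     (\<forall>x\<in>F. inverse x \<in> F)"

definition valuation_ring :: "'a::field set \<Rightarrow> 'a set \<Rightarrow> bool" where
  "valuation_ring F R \<longleftrightarrow> R \<subseteq> F \<and> 0 \<in> R \<and> 1 \<in> R \<and>
     (\<forall>x\<in>R. \<forall>y\<in>R. x + y \<in> R \<and> x - y \<in> R \<and> x * y \<in> R) \<and>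
     (\<forall>x\<in>F. x \<noteq> 0 \<longrightarrow> x \<in> R \<or> inverse x \<in> R)"

definition maxid :: "'a::field set \<Rightarrow> 'a set \<Rightarrow> 'a set" where
  "maxid F R = {x \<in> R. x = 0 \<or> inverse x \<notin> R}"

definition henselian :: "'a::field set \<Rightarrow> 'a set \<Rightarrow> bool" where
  "henselian F R \<longleftrightarrow>
     (\<forall>p::'a poly. (\<forall>i. coeff p i \<in> R) \<and> lead_coeff p = 1 \<longrightarrow>
        (\<forall>a\<in>R. poly p a \<in> maxid F R \<and> poly (pderiv p) a \<notin> maxid F R \<longrightarrow>
           (\<exists>b\<in>R. poly p b = 0 \<and> b - a \<in> maxid F R)))"

text \<open>ord x \<le> ord y (with ord 0 = \<infinity>).\<close>
definition val_le :: "'a::field set \<Rightarrow> 'a \<Rightarrow> 'a \<Rightarrow> bool" where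
  "val_le R x y \<longleftrightarrow> (x = 0 \<longrightarrow> y = 0) \<and> (x \<noteq> 0 \<longrightarrow> y / x \<in> R)"

text \<open>rv_N(x): the class of x in F^\<times>/(1+N M_F), and {0} for x = 0.\<close>
definition rv :: "'a::field set \<Rightarrow> 'a set \<Rightarrow> nat \<Rightarrow> 'a \<Rightarrow> 'a set" where
  "rv F R N x = (if x = 0 then {0}
     else {y \<in> F. y / x \<in> (\<lambda>m. 1 + of_nat N * m) ` maxid F R})"

definition RV :: "'a::field set \<Rightarrow> 'a set \<Rightarrow> nat \<Rightarrow> 'a set set" where
  "RV F R N = rv F R N ` F"

text \<open>Interpretations of the L_RV symbols on the RV_N sorts (functions by their graphs).\<close>
definition rv_mult_graph :: "'a::field set \<Rightarrow> 'a set \<Rightarrow> nat \<Rightarrow> 'a set \<Rightarrow> 'a set \<Rightarrow> 'a set \<Rightarrow> bool" where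
  "rv_mult_graph F R N \<xi> \<eta> \<zeta> \<longleftrightarrow>
     (\<exists>x\<in>F. \<exists>y\<in>F. rv F R N x = \<xi> \<and> rv F R N y = \<eta> \<and> rv F R N (x * y) = \<zeta>)"

definition rv_dvd :: "'a::field set \<Rightarrow> 'a set \<Rightarrow> nat \<Rightarrow> 'a set \<Rightarrow> 'a set \<Rightarrow> bool" where
  "rv_dvd F R N \<xi> \<eta> \<longleftrightarrow>
     (\<exists>x\<in>F. \<exists>y\<in>F. rv F R N x = \<xi> \<and> rv F R N y = \<eta> \<and> val_le R x y)"

definition rv_oplus :: "'a::field set \<Rightarrow> 'a set \<Rightarrow> nat \<Rightarrow> 'a set \<Rightarrow> 'a set \<Rightarrow> 'a set \<Rightarrow> bool" where
  "rv_oplus F R N \<xi>1 \<xi>2 \<xi>3 \<longleftrightarrow>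
     (\<exists>x1\<in>F. \<exists>x2\<in>F. \<exists>x3\<in>F. rv F R N x1 = \<xi>1 \<and> rv F R N x2 = \<xi>2 \<and>
        rv F R N x3 = \<xi>3 \<and> x1 + x2 = x3)"

definition rv_NM_graph :: "'a::field set \<Rightarrow> 'a set \<Rightarrow> nat \<Rightarrow> nat \<Rightarrow> 'a set \<Rightarrow> 'a set \<Rightarrow> bool" where
  "rv_NM_graph F R N M \<eta> \<xi> \<longleftrightarrow> (\<exists>x\<in>F. rv F R M x = \<eta> \<and> rv F R N x = \<xi>)"

text \<open>Products in RV are computed on representatives: rv_N(i a_i) \<xi>^(i-1) = rv_N(i a_i x^(i-1))
  for a representative x of \<xi>, and rv_{N^2}(a_i) \<xi>~^i = rv_{N^2}(a_i x'^i) for a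
  representative x' of \<xi>~.\<close>
definition rv_P :: "'a::field set \<Rightarrow> 'a set \<Rightarrow> nat \<Rightarrow> nat \<Rightarrow> 'a set \<Rightarrow> (nat \<Rightarrow> 'a set) \<Rightarrow> bool" where
  "rv_P F R N d \<xi> \<zeta> \<longleftrightarrow>
     \<xi> \<in> RV F R N \<and> \<xi> \<noteq> rv F R N 0 \<and>
     (\<exists>a::nat \<Rightarrow> 'a. (\<forall>i\<le>d. a i \<in> F \<and> rv F R (N^2) (a i) = \<zeta> i) \<and>
        \<comment> \<open>(i)\<close>
        (\<exists>x\<in>F. rv F R N x = \<xi> \<and>
           (\<forall>y::nat \<Rightarrow> 'a. (\<forall>i\<in>{1..d}. y i \<in> F \<and>
                 rv F R N (y i) = rv F R N (of_nat i * a i * x ^ (i - 1))) \<longrightarrow>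
              (\<forall>i\<in>{1..d}. val_le R (\<Sum>j=1..d. y j) (of_nat N * (a i * x ^ (i - 1)))))) \<and>
        \<comment> \<open>(ii)\<close>
        (\<exists>x'\<in>F. rv F R N x' = \<xi> \<and>
           (\<exists>y::nat \<Rightarrow> 'a. (\<forall>i\<le>d. y i \<in> F \<and>
                 rv F R (N^2) (y i) = rv F R (N^2) (a i * x' ^ i)) \<and>
              (\<Sum>i=0..d. y i) = 0)))"

definition rv_incl :: "'a::field set \<Rightarrow> 'a set \<Rightarrow> nat \<Rightarrow> 'a set \<Rightarrow> 'a set" where
  "rv_incl K OL N \<xi> = rv UNIV OL N (SOME x. x \<in> K \<and> rv K (K \<inter> OL) N x = \<xi>)"

end

theory Submission
  imports Defs
begin

text \<open>
  Both \<open>rv\<^sub>N\<close>-maps are governed by one relation: \<open>rv\<^sub>N x = rv\<^sub>N y\<close> holds in \<open>K\<close> iff it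
  holds in \<open>L\<close>, namely iff \<open>y \<in> x (1 + N \<M>\<^sub>L)\<close>, because \<open>\<M>\<^sub>K = K \<inter> \<M>\<^sub>L\<close> and \<open>N\<close> is
  invertible. Hence the inclusion induces an injective map on \<open>RV\<^sub>N\<close> which respects
  multiplication, divisibility and the maps \<open>rv\<^sub>N\<^sub>,\<^sub>M\<close>. For \<open>\<oplus>\<close> and for condition (i) of
  \<open>P\<^sub>N\<^sub>,\<^sub>d\<close> the witnesses can be moved from \<open>L\<close> into \<open>K\<close>: an element of \<open>K\<close> which is a
  \<open>K\<close>-linear combination of elements of \<open>\<M>\<^sub>L\<close> is also one of elements of \<open>\<M>\<^sub>K\<close>, since the
  coefficient of minimal valuation can absorb the whole sum. For condition (ii), an approximate
  root in \<open>L\<close> of \<open>f = \<Sum> a\<^sub>i X\<^sup>i\<close> near a representative \<open>b \<in> K\<close> of \<open>\<xi>\<close> turns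
  \<open>f(b (1 + N t)) / (N b f'(b))\<close> into a polynomial in \<open>t\<close> with integral coefficients, linear
  coefficient \<open>1\<close> and residually vanishing constant term, where condition (i) provides the
  integrality; Hensel's lemma in \<open>K\<close> then yields an exact root in \<open>K\<close>.
\<close>

lemma subfield_UNIV: "subfield UNIV"
  by (simp add: subfield_def)

lemma subfield_zero [simp]: "subfield F \<Longrightarrow> 0 \<in> F"
  and subfield_one [simp]: "subfield F \<Longrightarrow> 1 \<in> F"
  and subfield_add [intro]: "subfield F \<Longrightarrow> x \<in> F \<Longrightarrow> y \<in> F \<Longrightarrow> x + y \<in> F"
  and subfield_diff [intro]: "subfield F \<Longrightarrow> x \<in> F \<Longrightarrow> y \<in> F \<Longrightarrow> x - y \<in> F"
  and subfield_mult [intro]: "subfield F \<Longrightarrow> x \<in> F \<Longrightarrow> y \<in> F \<Longrightarrow> x * y \<in> F"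
  and subfield_inverse [intro]: "subfield F \<Longrightarrow> x \<in> F \<Longrightarrow> inverse x \<in> F"
  by (auto simp: subfield_def)

lemma subfield_divide [intro]: "subfield F \<Longrightarrow> x \<in> F \<Longrightarrow> y \<in> F \<Longrightarrow> x / y \<in> F"
  by (auto simp: divide_inverse)

lemma subfield_uminus [intro]: "subfield F \<Longrightarrow> x \<in> F \<Longrightarrow> - x \<in> F"
  using subfield_diff[of F 0 x] by simp

lemma subfield_of_nat [simp]: "subfield F \<Longrightarrow> of_nat n \<in> F"
  by (induction n) auto

lemma subfield_power [intro]: "subfield F \<Longrightarrow> x \<in> F \<Longrightarrow> x ^ k \<in> F"
  by (induction k) auto

lemma subfield_sum [intro]: "subfield F \<Longrightarrow> (\<And>i. i \<in> S \<Longrightarrow> f i \<in> F) \<Longrightarrow> sum f S \<in> F"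
  by (induction S rule: infinite_finite_induct) auto

lemma RV_E:
  assumes "\<xi> \<in> RV F R N"
  obtains x where "x \<in> F" "\<xi> = rv F R N x"
  using assms unfolding RV_def by blast

lemma sum_atLeast0_atMost_split: "(\<Sum>k = 0..n::nat. f k) = f 0 + (\<Sum>k = 1..n. f k)"
  using sum.atLeast_Suc_atMost[of 0 n f] by simp

section \<open>The valuation ring of \<open>L\<close>\<close>

locale valued_field =
  fixes OL :: "'a::field_char_0 set"
  assumes valuation_ring: "valuation_ring UNIV OL"
begin

abbreviation \<M> :: "'a set" where "\<M> \<equiv> maxid UNIV OL"

lemma OL_zero [simp]: "0 \<in> OL" and OL_one [simp]: "1 \<in> OL"
  using valuation_ring by (auto simp: valuation_ring_def)

lemma OL_add [intro]: "x \<in> OL \<Longrightarrow> y \<in> OL \<Longrightarrow> x + y \<in> OL"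
  and OL_diff [intro]: "x \<in> OL \<Longrightarrow> y \<in> OL \<Longrightarrow> x - y \<in> OL"
  and OL_mult [intro]: "x \<in> OL \<Longrightarrow> y \<in> OL \<Longrightarrow> x * y \<in> OL"
  and OL_or_inverse: "x \<noteq> 0 \<Longrightarrow> x \<in> OL \<or> inverse x \<in> OL"
  using valuation_ring by (auto simp: valuation_ring_def)

lemma OL_uminus [intro]: "x \<in> OL \<Longrightarrow> - x \<in> OL"
  using OL_diff[of 0 x] by simp

lemma OL_of_nat [simp]: "of_nat n \<in> OL"
  by (induction n) auto

lemma OL_power [intro]: "x \<in> OL \<Longrightarrow> x ^ k \<in> OL"
  by (induction k) auto

lemma OL_sum [intro]: "(\<And>i. i \<in> S \<Longrightarrow> f i \<in> OL) \<Longrightarrow> sum f S \<in> OL"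
  by (induction S rule: infinite_finite_induct) auto

lemma maxid_iff: "m \<in> \<M> \<longleftrightarrow> m \<in> OL \<and> (m = 0 \<or> inverse m \<notin> OL)"
  by (simp add: maxid_def)

lemma maxid_OL [dest]: "m \<in> \<M> \<Longrightarrow> m \<in> OL"
  by (simp add: maxid_iff)

lemma zero_maxid [simp]: "0 \<in> \<M>"
  by (simp add: maxid_iff)

lemma maxid_mult_left [intro]:
  assumes a: "a \<in> OL" and m: "m \<in> \<M>"
  shows "a * m \<in> \<M>"
proof (cases "a = 0 \<or> m = 0")
  case False
  have "inverse (a * m) \<notin> OL"
  proof
    assume "inverse (a * m) \<in> OL"
    then have "a * inverse (a * m) \<in> OL"
      using a by blast
    also have "a * inverse (a * m) = inverse m"
      using False by (simp add: field_simps)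
    finally show False
      using m False by (simp add: maxid_iff)
  qed
  then show ?thesis
    using a m by (auto simp: maxid_iff)
qed auto

lemma maxid_mult_right [intro]: "m \<in> \<M> \<Longrightarrow> a \<in> OL \<Longrightarrow> m * a \<in> \<M>"
  using maxid_mult_left[of a m] by (simp add: mult.commute)

lemma maxid_add [intro]:
  assumes m1: "m1 \<in> \<M>" and m2: "m2 \<in> \<M>"
  shows "m1 + m2 \<in> \<M>"
proof -
  have *: "u + v \<in> \<M>" if "u \<in> \<M>" "v \<in> \<M>" "v \<noteq> 0" "u / v \<in> OL" for u v
  proof -
    have "(1 + u / v) * v \<in> \<M>"
      using that by (intro maxid_mult_left OL_add) auto
    moreover have "(1 + u / v) * v = u + v"
      using \<open>v \<noteq> 0\<close> by (simp add: field_simps)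
    ultimately show ?thesis
      by simp
  qed
  show ?thesis
  proof (cases "m1 = 0 \<or> m2 = 0")
    case False
    then have "m1 / m2 \<in> OL \<or> m2 / m1 \<in> OL"
      using OL_or_inverse[of "m1 / m2"] by (auto simp: inverse_divide)
    then show ?thesis
      using *[OF m1 m2] *[OF m2 m1] False by (auto simp: add.commute)
  qed (use m1 m2 in auto)
qed

lemma maxid_uminus [intro]: "m \<in> \<M> \<Longrightarrow> - m \<in> \<M>"
  using maxid_mult_left[of "-1" m] OL_uminus[OF OL_one] by simp

lemma maxid_diff [intro]: "m1 \<in> \<M> \<Longrightarrow> m2 \<in> \<M> \<Longrightarrow> m1 - m2 \<in> \<M>"
  using maxid_add[of m1 "- m2"] by auto

lemma maxid_sum [intro]: "(\<And>i. i \<in> S \<Longrightarrow> f i \<in> \<M>) \<Longrightarrow> sum f S \<in> \<M>"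
  by (induction S rule: infinite_finite_induct) auto

lemma maxid_power [intro]: "m \<in> \<M> \<Longrightarrow> k \<ge> 1 \<Longrightarrow> m ^ k \<in> \<M>"
  using maxid_mult_right[of m "m ^ (k - 1)"] by (cases k) auto

lemma one_plus_maxid_notin_maxid: "m \<in> \<M> \<Longrightarrow> 1 + m \<notin> \<M>"
proof
  assume "m \<in> \<M>" "1 + m \<in> \<M>"
  then have "(1 + m) - m \<in> \<M>"
    by blast
  then show False
    by (simp add: maxid_iff)
qed

lemma one_plus_maxid_nonzero: "m \<in> \<M> \<Longrightarrow> 1 + m \<noteq> 0"
  using one_plus_maxid_notin_maxid[of m] zero_maxid by (metis)

lemma inverse_one_plus_maxid: "m \<in> \<M> \<Longrightarrow> inverse (1 + m) \<in> OL"
  using one_plus_maxid_notin_maxid[of m] by (auto simp: maxid_iff)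

lemma not_val_le_iff: "\<not> val_le OL s w \<longleftrightarrow> w \<noteq> 0 \<and> s / w \<in> \<M>"
  using OL_or_inverse[of "w / s"]
  by (cases "w = 0") (auto simp: val_le_def maxid_iff inverse_divide)

section \<open>Equality in \<open>RV\<^sub>N\<close> on representatives\<close>

definition rv_equiv :: "nat \<Rightarrow> 'a \<Rightarrow> 'a \<Rightarrow> bool" where
  "rv_equiv N x y \<longleftrightarrow> (\<exists>m\<in>\<M>. y = x * (1 + of_nat N * m))"

lemma rv_equivI: "m \<in> \<M> \<Longrightarrow> y = x * (1 + of_nat N * m) \<Longrightarrow> rv_equiv N x y"
  unfolding rv_equiv_def by blast

lemma rv_equivE:
  assumes "rv_equiv N x y"
  obtains m where "m \<in> \<M>" "y = x * (1 + of_nat N * m)"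
  using assms unfolding rv_equiv_def by blast

lemma rv_equiv_refl [simp]: "rv_equiv N x x"
  by (rule rv_equivI[of 0]) auto

lemma rv_equiv_zero_left [simp]: "rv_equiv N 0 y \<longleftrightarrow> y = 0"
  unfolding rv_equiv_def by auto

lemma rv_equiv_zero_right [simp]: "rv_equiv N x 0 \<longleftrightarrow> x = 0"
  unfolding rv_equiv_def by (auto dest: one_plus_maxid_nonzero[OF maxid_mult_left[OF OL_of_nat]])

lemma rv_equiv_sym:
  assumes "rv_equiv N x y"
  shows "rv_equiv N y x"
proof -
  obtain m where m: "m \<in> \<M>" "y = x * (1 + of_nat N * m)"
    using assms by (rule rv_equivE)
  have Nm: "of_nat N * m \<in> \<M>"
    using m by (intro maxid_mult_left) auto
  have "- m * inverse (1 + of_nat N * m) \<in> \<M>"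
    using m(1) inverse_one_plus_maxid[OF Nm] by (intro maxid_mult_right maxid_uminus)
  moreover have "x = y * (1 + of_nat N * (- m * inverse (1 + of_nat N * m)))"
    using m(2) one_plus_maxid_nonzero[OF Nm] by (simp add: field_simps)
  ultimately show ?thesis
    by (rule rv_equivI)
qed

lemma rv_equiv_commute: "rv_equiv N x y \<longleftrightarrow> rv_equiv N y x"
  using rv_equiv_sym by blast

lemma rv_equiv_mult:
  assumes "rv_equiv N x x'" "rv_equiv N y y'"
  shows "rv_equiv N (x * y) (x' * y')"
proof -
  obtain m1 where m1: "m1 \<in> \<M>" "x' = x * (1 + of_nat N * m1)"
    using assms(1) by (rule rv_equivE)
  obtain m2 where m2: "m2 \<in> \<M>" "y' = y * (1 + of_nat N * m2)"
    using assms(2) by (rule rv_equivE)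
  have "m1 + m2 + of_nat N * m1 * m2 \<in> \<M>"
    using m1 m2 by (intro maxid_add maxid_mult_left OL_mult) auto
  moreover have "x' * y' = x * y * (1 + of_nat N * (m1 + m2 + of_nat N * m1 * m2))"
    unfolding m1 m2 by (simp add: algebra_simps)
  ultimately show ?thesis
    by (rule rv_equivI)
qed

lemma rv_equiv_trans:
  assumes "rv_equiv N x y" "rv_equiv N y z"
  shows "rv_equiv N x z"
proof -
  obtain m where m: "m \<in> \<M>" "z = y * (1 + of_nat N * m)"
    using assms(2) by (rule rv_equivE)
  have "rv_equiv N 1 (1 + of_nat N * m)"
    by (rule rv_equivI[OF m(1)]) simp
  from rv_equiv_mult[OF assms(1) this] show ?thesis
    using m(2) by simp
qed

lemma rv_equiv_power: "rv_equiv N x x' \<Longrightarrow> rv_equiv N (x ^ k) (x' ^ k)"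
  by (induction k) (auto intro: rv_equiv_mult)

lemma rv_equiv_mult_left: "rv_equiv N x x' \<Longrightarrow> rv_equiv N (c * x) (c * x')"
  using rv_equiv_mult[OF rv_equiv_refl] .

lemma rv_equiv_dvd:
  assumes "N dvd N'" "rv_equiv N' x y"
  shows "rv_equiv N x y"
proof -
  obtain q where q: "N' = N * q"
    using assms(1) by blast
  obtain m where m: "m \<in> \<M>" "y = x * (1 + of_nat N' * m)"
    using assms(2) by (rule rv_equivE)
  show ?thesis
    using m q by (intro rv_equivI[of "of_nat q * m"]) (auto simp: algebra_simps)
qed

lemma val_le_rv_equiv_right:
  assumes "rv_equiv N v v'" "val_le OL u v"
  shows "val_le OL u v'"
proof -
  obtain m where m: "m \<in> \<M>" "v' = v * (1 + of_nat N * m)"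
    using assms(1) by (rule rv_equivE)
  have "v / u * (1 + of_nat N * m) \<in> OL" if "v / u \<in> OL"
    using that m by (intro OL_mult OL_add) auto
  then show ?thesis
    using assms m by (auto simp: val_le_def)
qed

lemma val_le_rv_equiv_left:
  assumes "rv_equiv N u u'" "val_le OL u v"
  shows "val_le OL u' v"
proof -
  obtain m where m: "m \<in> \<M>" "u' = u * (1 + of_nat N * m)"
    using assms(1) by (rule rv_equivE)
  have Nm: "of_nat N * m \<in> \<M>"
    using m by (intro maxid_mult_left) auto
  have "v / u * inverse (1 + of_nat N * m) \<in> OL" if "v / u \<in> OL"
    using that inverse_one_plus_maxid[OF Nm] by (intro OL_mult)
  then show ?thesis
    using assms m one_plus_maxid_nonzero[OF Nm] by (auto simp: val_le_def field_simps)
qed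

lemma maxid_subfield: "subfield F \<Longrightarrow> maxid F (F \<inter> OL) = F \<inter> \<M>"
  by (auto simp: maxid_def)

lemma rv_subfield:
  assumes F: "subfield F" and N: "N \<ge> 1" and x: "x \<in> F"
  shows "rv F (F \<inter> OL) N x = F \<inter> {y. rv_equiv N x y}"
proof (cases "x = 0")
  case False
  have "y / x \<in> (\<lambda>m. 1 + of_nat N * m) ` (F \<inter> \<M>) \<longleftrightarrow> rv_equiv N x y" if y: "y \<in> F" for y
  proof
    assume "rv_equiv N x y"
    then obtain m where m: "m \<in> \<M>" "y = x * (1 + of_nat N * m)"
      by (rule rv_equivE)
    have "m = (y / x - 1) / of_nat N"
      using m False N by (simp add: field_simps)
    also have "\<dots> \<in> F"
      using F x y by (intro subfield_divide subfield_diff) auto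
    finally show "y / x \<in> (\<lambda>m. 1 + of_nat N * m) ` (F \<inter> \<M>)"
      using m False by auto
  qed (use False in \<open>auto intro: rv_equivI simp: field_simps\<close>)
  then show ?thesis
    using False F by (auto simp: rv_def maxid_subfield)
qed (use F in \<open>auto simp: rv_def\<close>)

lemma rv_subfield_eq_iff:
  assumes "subfield F" "N \<ge> 1" "x \<in> F" "y \<in> F"
  shows "rv F (F \<inter> OL) N x = rv F (F \<inter> OL) N y \<longleftrightarrow> rv_equiv N x y"
proof
  assume eq: "rv F (F \<inter> OL) N x = rv F (F \<inter> OL) N y"
  have "y \<in> rv F (F \<inter> OL) N y"
    using assms by (simp add: rv_subfield)
  then have "y \<in> rv F (F \<inter> OL) N x"
    by (simp only: eq)
  then show "rv_equiv N x y"
    using assms by (simp add: rv_subfield)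
next
  assume "rv_equiv N x y"
  then have "rv_equiv N x z \<longleftrightarrow> rv_equiv N y z" for z
    by (metis rv_equiv_sym rv_equiv_trans)
  then show "rv F (F \<inter> OL) N x = rv F (F \<inter> OL) N y"
    using assms by (simp add: rv_subfield)
qed

lemma rv_subfield_eq_rv_iff:
  "subfield F \<Longrightarrow> N \<ge> 1 \<Longrightarrow> x \<in> F \<Longrightarrow> a \<in> F \<Longrightarrow>
    rv F (F \<inter> OL) N x = rv F (F \<inter> OL) N a \<longleftrightarrow> rv_equiv N a x"
  using rv_subfield_eq_iff rv_equiv_commute by blast

lemma rv_UNIV_eq_iff: "N \<ge> 1 \<Longrightarrow> rv UNIV OL N x = rv UNIV OL N y \<longleftrightarrow> rv_equiv N x y"
  using rv_subfield_eq_iff[OF subfield_UNIV, of N x y] by simp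

lemma val_le_subfield: "subfield F \<Longrightarrow> u \<in> F \<Longrightarrow> v \<in> F \<Longrightarrow> val_le (F \<inter> OL) u v \<longleftrightarrow> val_le OL u v"
  by (auto simp: val_le_def)

context
  fixes F :: "'a set"
  assumes F: "subfield F"
begin

lemma rv_mult_graph_subfield_iff:
  assumes "N \<ge> 1" "a \<in> F" "b \<in> F" "c \<in> F"
  shows "rv_mult_graph F (F \<inter> OL) N (rv F (F \<inter> OL) N a) (rv F (F \<inter> OL) N b) (rv F (F \<inter> OL) N c)
    \<longleftrightarrow> rv_equiv N (a * b) c"
proof
  assume "rv_mult_graph F (F \<inter> OL) N (rv F (F \<inter> OL) N a) (rv F (F \<inter> OL) N b) (rv F (F \<inter> OL) N c)"
  then obtain x y where "x \<in> F" "y \<in> F" "rv_equiv N x a" "rv_equiv N y b" "rv_equiv N (x * y) c"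
    unfolding rv_mult_graph_def using F assms by (metis rv_subfield_eq_iff subfield_mult)
  then show "rv_equiv N (a * b) c"
    by (metis rv_equiv_mult rv_equiv_sym rv_equiv_trans)
next
  assume "rv_equiv N (a * b) c"
  then show "rv_mult_graph F (F \<inter> OL) N (rv F (F \<inter> OL) N a) (rv F (F \<inter> OL) N b) (rv F (F \<inter> OL) N c)"
    unfolding rv_mult_graph_def using F assms by (metis rv_subfield_eq_iff subfield_mult)
qed

lemma rv_dvd_subfield_iff:
  assumes "N \<ge> 1" "a \<in> F" "b \<in> F"
  shows "rv_dvd F (F \<inter> OL) N (rv F (F \<inter> OL) N a) (rv F (F \<inter> OL) N b) \<longleftrightarrow> val_le OL a b"
proof
  assume "rv_dvd F (F \<inter> OL) N (rv F (F \<inter> OL) N a) (rv F (F \<inter> OL) N b)"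
  then obtain x y where "x \<in> F" "y \<in> F" "rv_equiv N x a" "rv_equiv N y b" "val_le OL x y"
    unfolding rv_dvd_def using F assms by (metis rv_subfield_eq_iff val_le_subfield)
  then show "val_le OL a b"
    by (metis val_le_rv_equiv_left val_le_rv_equiv_right)
qed (use F assms in \<open>auto simp: rv_dvd_def val_le_subfield\<close>)

lemma rv_NM_graph_subfield_iff:
  assumes "N \<ge> 1" "N dvd M" "M \<ge> 1" "a \<in> F" "b \<in> F"
  shows "rv_NM_graph F (F \<inter> OL) N M (rv F (F \<inter> OL) M a) (rv F (F \<inter> OL) N b) \<longleftrightarrow> rv_equiv N a b"
proof
  assume "rv_NM_graph F (F \<inter> OL) N M (rv F (F \<inter> OL) M a) (rv F (F \<inter> OL) N b)"
  then obtain x where "x \<in> F" "rv_equiv M x a" "rv_equiv N x b"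
    unfolding rv_NM_graph_def using F assms by (metis rv_subfield_eq_iff)
  then show "rv_equiv N a b"
    using rv_equiv_dvd[OF \<open>N dvd M\<close>] by (metis rv_equiv_sym rv_equiv_trans)
next
  assume "rv_equiv N a b"
  then show "rv_NM_graph F (F \<inter> OL) N M (rv F (F \<inter> OL) M a) (rv F (F \<inter> OL) N b)"
    unfolding rv_NM_graph_def using F assms by (auto simp: rv_subfield_eq_iff intro!: bexI[of _ a])
qed

lemma rv_oplus_subfield_iff:
  assumes "N \<ge> 1" "a1 \<in> F" "a2 \<in> F" "a3 \<in> F"
  shows "rv_oplus F (F \<inter> OL) N (rv F (F \<inter> OL) N a1) (rv F (F \<inter> OL) N a2) (rv F (F \<inter> OL) N a3)
    \<longleftrightarrow> (\<exists>y1\<in>F. \<exists>y2\<in>F. \<exists>y3\<in>F.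
          rv_equiv N a1 y1 \<and> rv_equiv N a2 y2 \<and> rv_equiv N a3 y3 \<and> y1 + y2 = y3)"
  unfolding rv_oplus_def using assms rv_subfield_eq_rv_iff[OF F \<open>N \<ge> 1\<close>]
  by (auto simp: Bex_def cong: conj_cong)

end

text \<open>Conditions (i) and (ii) of \<open>P\<^sub>N\<^sub>,\<^sub>d\<close> for coefficients \<open>a\<close> and a representative \<open>x\<close> of \<open>\<xi>\<close>,
  with the witnesses \<open>y\<close> taken from the subfield \<open>F\<close>.\<close>

definition derivative_condition :: "'a set \<Rightarrow> nat \<Rightarrow> nat \<Rightarrow> (nat \<Rightarrow> 'a) \<Rightarrow> 'a \<Rightarrow> bool" where
  "derivative_condition F N d a x \<longleftrightarrow>
     (\<forall>y. (\<forall>i\<in>{1..d}. y i \<in> F \<and> rv_equiv N (of_nat i * a i * x ^ (i - 1)) (y i)) \<longrightarrow>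
        (\<forall>i\<in>{1..d}. val_le OL (\<Sum>j = 1..d. y j) (of_nat N * (a i * x ^ (i - 1)))))"

definition root_condition :: "'a set \<Rightarrow> nat \<Rightarrow> nat \<Rightarrow> (nat \<Rightarrow> 'a) \<Rightarrow> 'a \<Rightarrow> bool" where
  "root_condition F N d a x \<longleftrightarrow>
     (\<exists>y. (\<forall>i\<le>d. y i \<in> F \<and> rv_equiv (N\<^sup>2) (a i * x ^ i) (y i)) \<and> (\<Sum>i = 0..d. y i) = 0)"

definition P_witnessed :: "'a set \<Rightarrow> nat \<Rightarrow> nat \<Rightarrow> (nat \<Rightarrow> 'a) \<Rightarrow> 'a \<Rightarrow> bool" where
  "P_witnessed F N d \<alpha> b \<longleftrightarrow> b \<noteq> 0 \<and>
    (\<exists>a. (\<forall>i\<le>d. a i \<in> F \<and> rv_equiv (N\<^sup>2) (\<alpha> i) (a i)) \<and>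
      (\<exists>x\<in>F. rv_equiv N b x \<and> derivative_condition F N d a x) \<and>
      (\<exists>x\<in>F. rv_equiv N b x \<and> root_condition F N d a x))"

lemma derivative_condition_subfield_iff:
  assumes F: "subfield F" and N: "N \<ge> 1" and a: "\<forall>i\<le>d. a i \<in> F" and x: "x \<in> F"
  shows "(\<forall>y. (\<forall>i\<in>{1..d}. y i \<in> F \<and>
        rv F (F \<inter> OL) N (y i) = rv F (F \<inter> OL) N (of_nat i * a i * x ^ (i - 1))) \<longrightarrow>
      (\<forall>i\<in>{1..d}. val_le (F \<inter> OL) (\<Sum>j = 1..d. y j) (of_nat N * (a i * x ^ (i - 1)))))
    \<longleftrightarrow> derivative_condition F N d a x"
proof -
  have "of_nat i * a i * x ^ (i - 1) \<in> F" "of_nat N * (a i * x ^ (i - 1)) \<in> F" if "i \<in> {1..d}" for i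
    using F a x that by (intro subfield_mult subfield_power; simp)+
  moreover have "(\<Sum>j = 1..d. y j) \<in> F" if "\<forall>i\<in>{1..d}. y i \<in> F" for y
    using F that by (intro subfield_sum) auto
  ultimately show ?thesis
    unfolding derivative_condition_def using rv_subfield_eq_rv_iff[OF F N] val_le_subfield[OF F]
    by (smt (verit))
qed

lemma root_condition_subfield_iff:
  assumes F: "subfield F" and N: "N \<ge> 1" and a: "\<forall>i\<le>d. a i \<in> F" and x: "x \<in> F"
  shows "(\<exists>y. (\<forall>i\<le>d. y i \<in> F \<and>
        rv F (F \<inter> OL) (N\<^sup>2) (y i) = rv F (F \<inter> OL) (N\<^sup>2) (a i * x ^ i)) \<and> (\<Sum>i = 0..d. y i) = 0)
    \<longleftrightarrow> root_condition F N d a x"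
proof -
  have "a i * x ^ i \<in> F" if "i \<le> d" for i
    using F a x that by (intro subfield_mult subfield_power) auto
  then show ?thesis
    unfolding root_condition_def using rv_subfield_eq_rv_iff[OF F] N by (auto cong: conj_cong)
qed

lemma rv_P_subfield_iff:
  assumes F: "subfield F" and N: "N \<ge> 1" and b: "b \<in> F" and \<alpha>: "\<forall>i\<le>d. \<alpha> i \<in> F"
    and \<zeta>: "\<forall>i\<le>d. \<zeta> i = rv F (F \<inter> OL) (N\<^sup>2) (\<alpha> i)"
  shows "rv_P F (F \<inter> OL) N d (rv F (F \<inter> OL) N b) \<zeta> \<longleftrightarrow> P_witnessed F N d \<alpha> b"
proof -
  have N2: "N\<^sup>2 \<ge> 1"
    using N by simp
  have coeffs: "(\<forall>i\<le>d. a i \<in> F \<and> rv F (F \<inter> OL) (N\<^sup>2) (a i) = \<zeta> i) \<longleftrightarrow>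
      (\<forall>i\<le>d. a i \<in> F \<and> rv_equiv (N\<^sup>2) (\<alpha> i) (a i))" for a
    using \<zeta> \<alpha> rv_subfield_eq_rv_iff[OF F N2] by (simp cong: conj_cong)
  have "rv F (F \<inter> OL) N b \<noteq> rv F (F \<inter> OL) N 0 \<longleftrightarrow> b \<noteq> 0"
    using rv_subfield_eq_iff[OF F N b] F by simp
  moreover have "rv F (F \<inter> OL) N b \<in> RV F (F \<inter> OL) N"
    using b by (simp add: RV_def)
  ultimately show ?thesis
    unfolding rv_P_def P_witnessed_def using coeffs rv_subfield_eq_rv_iff[OF F N _ b]
      derivative_condition_subfield_iff[OF F N] root_condition_subfield_iff[OF F N]
    by (auto cong: conj_cong)
qed

lemma derivative_condition_mono:
  "F \<subseteq> G \<Longrightarrow> derivative_condition G N d a x \<Longrightarrow> derivative_condition F N d a x"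
  unfolding derivative_condition_def by blast

lemma derivative_condition_rv_equiv:
  assumes a: "\<forall>i\<le>d. rv_equiv (N\<^sup>2) (a i) (a' i)" and x: "rv_equiv N x x'"
    and cond: "derivative_condition UNIV N d a x"
  shows "derivative_condition UNIV N d a' x'"
  unfolding derivative_condition_def
proof (intro allI impI ballI)
  fix y i
  assume y: "\<forall>i\<in>{1..d}. y i \<in> UNIV \<and> rv_equiv N (of_nat i * a' i * x' ^ (i - 1)) (y i)"
    and i: "i \<in> {1..d}"
  have a_N: "rv_equiv N (a j) (a' j)" if "j \<in> {1..d}" for j
    using a that rv_equiv_dvd[of N "N\<^sup>2"] by (simp add: power2_eq_square)
  have summand: "rv_equiv N (c * a j * x ^ k) (c * a' j * x' ^ k)" if "j \<in> {1..d}" for c j k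
    using rv_equiv_mult[OF rv_equiv_mult_left[OF a_N[OF that]] rv_equiv_power[OF x]]
    by (simp add: mult.assoc)
  have "\<forall>j\<in>{1..d}. y j \<in> UNIV \<and> rv_equiv N (of_nat j * a j * x ^ (j - 1)) (y j)"
    using y summand by (metis rv_equiv_trans)
  then have "val_le OL (\<Sum>j = 1..d. y j) (of_nat N * (a i * x ^ (i - 1)))"
    using cond i unfolding derivative_condition_def by blast
  then show "val_le OL (\<Sum>j = 1..d. y j) (of_nat N * (a' i * x' ^ (i - 1)))"
    using val_le_rv_equiv_right summand[OF i, of "of_nat N" "i - 1"] by (simp add: mult.assoc)
qed

lemma root_condition_rv_equiv:
  assumes a: "\<forall>i\<le>d. rv_equiv (N\<^sup>2) (a i) (a' i)" and cond: "root_condition UNIV N d a x"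
  shows "root_condition UNIV N d a' x"
proof -
  obtain y where y: "\<forall>i\<le>d. rv_equiv (N\<^sup>2) (a i * x ^ i) (y i)" "(\<Sum>i = 0..d. y i) = 0"
    using cond unfolding root_condition_def by blast
  have "rv_equiv (N\<^sup>2) (a' i * x ^ i) (y i)" if "i \<le> d" for i
    using a y that by (metis rv_equiv_mult rv_equiv_refl rv_equiv_sym rv_equiv_trans)
  then show ?thesis
    using y unfolding root_condition_def by blast
qed

lemma root_conditionE:
  fixes a :: "nat \<Rightarrow> 'a"
  assumes "root_condition UNIV N d a x"
  obtains m where "\<forall>i\<le>d. m i \<in> \<M>" "(\<Sum>i = 0..d. a i * x ^ i * (1 + of_nat N ^ 2 * m i)) = 0"
proof -
  obtain y where y: "\<forall>i\<le>d. rv_equiv (N\<^sup>2) (a i * x ^ i) (y i)" and sum_y: "(\<Sum>i = 0..d. y i) = 0"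
    using assms unfolding root_condition_def by blast
  have "\<forall>i\<le>d. \<exists>m. m \<in> \<M> \<and> y i = a i * x ^ i * (1 + of_nat N ^ 2 * m)"
    using y unfolding rv_equiv_def by auto
  then obtain m where m: "\<forall>i\<le>d. m i \<in> \<M> \<and> y i = a i * x ^ i * (1 + of_nat N ^ 2 * m i)"
    unfolding choice_iff' by blast
  then have "(\<Sum>i = 0..d. a i * x ^ i * (1 + of_nat N ^ 2 * m i)) = 0"
    using sum_y by (metis (no_types, lifting) atLeastAtMost_iff sum.cong)
  then show ?thesis
    using that m by blast
qed

section \<open>Descent of witnesses from \<open>L\<close> to \<open>K\<close>\<close>

lemma ex_min_valuation:
  assumes "finite S" "\<exists>j\<in>S. c j \<noteq> 0"
  shows "\<exists>k\<in>S. c k \<noteq> 0 \<and> (\<forall>j\<in>S. c j / c k \<in> OL)"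
  using assms
proof (induction S rule: finite_induct)
  case (insert x S)
  show ?case
  proof (cases "\<exists>j\<in>S. c j \<noteq> 0")
    case False
    then show ?thesis
      using insert.prems by (intro bexI[of _ x]) auto
  next
    case True
    then obtain k where k: "k \<in> S" "c k \<noteq> 0" "\<forall>j\<in>S. c j / c k \<in> OL"
      using insert.IH by blast
    show ?thesis
    proof (cases "c x / c k \<in> OL")
      case True
      then show ?thesis
        using k by (intro bexI[of _ k]) auto
    next
      case False
      then have "c x \<noteq> 0"
        by auto
      with False have x: "c x \<noteq> 0" "c k / c x \<in> OL"
        using OL_or_inverse[of "c x / c k"] k(2) by (auto simp: inverse_divide)
      have "c j / c x \<in> OL" if "j \<in> S" for j
      proof -
        have "c j / c k * (c k / c x) \<in> OL"
          using k that x by (intro OL_mult) auto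
        then show ?thesis
          using k(2) by simp
      qed
      then show ?thesis
        using x by (intro bexI[of _ x]) auto
    qed
  qed
qed simp

lemma vanishing_sum_first_summand_bounded:
  fixes E w :: "nat \<Rightarrow> 'a"
  assumes sum: "(\<Sum>i = 0..d. E i * w i) = 0" and E: "\<forall>i\<in>{1..d}. E i / e \<in> OL"
    and w: "\<forall>i\<in>{1..d}. w i \<in> OL" and w0: "w 0 \<noteq> 0" "inverse (w 0) \<in> OL"
  shows "E 0 / e \<in> OL"
proof -
  have "E 0 * w 0 = - (\<Sum>i = 1..d. E i * w i)"
    using sum unfolding sum_atLeast0_atMost_split by (simp add: add_eq_0_iff)
  then have "E 0 / e * w 0 = - (\<Sum>i = 1..d. E i / e * w i)"
    by (simp add: sum_divide_distrib[symmetric])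
  also have "\<dots> \<in> OL"
    using E w by (intro OL_uminus OL_sum OL_mult) auto
  finally have "E 0 / e * w 0 * inverse (w 0) \<in> OL"
    by (rule OL_mult[OF _ w0(2)])
  then show ?thesis
    by (simp only: mult.assoc right_inverse[OF w0(1)] mult_1_right)
qed

text \<open>The summand of minimal valuation absorbs the whole sum.\<close>
lemma maxid_combination_descends:
  assumes F: "subfield F" and S: "finite S" and c: "\<forall>j\<in>S. c j \<in> F" and s: "s \<in> F"
    and m: "\<forall>j\<in>S. m j \<in> \<M>" and s_eq: "s = (\<Sum>j\<in>S. c j * m j)"
  shows "\<exists>m'. (\<forall>j\<in>S. m' j \<in> F \<inter> \<M>) \<and> s = (\<Sum>j\<in>S. c j * m' j)"
proof (cases "\<exists>j\<in>S. c j \<noteq> 0")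
  case False
  then show ?thesis
    using s_eq F by (intro exI[of _ "\<lambda>_. 0"]) auto
next
  case True
  then obtain k where k: "k \<in> S" "c k \<noteq> 0" "\<forall>j\<in>S. c j / c k \<in> OL"
    using ex_min_valuation[OF S] by blast
  have "s / c k = (\<Sum>j\<in>S. c j / c k * m j)"
    unfolding s_eq by (simp add: sum_divide_distrib)
  also have "\<dots> \<in> \<M>"
    using k m by (intro maxid_sum maxid_mult_left) auto
  finally have "s / c k \<in> F \<inter> \<M>"
    using F s c k by auto
  moreover have "s = (\<Sum>j\<in>S. c j * (if j = k then s / c k else 0))"
    using k S by (simp add: if_distrib sum.delta cong: if_cong)
  ultimately show ?thesis
    using F by (intro exI[of _ "\<lambda>j. if j = k then s / c k else 0"]) auto
qed

text \<open>Writing \<open>y\<^sub>j = c\<^sub>j (1 + N m\<^sub>j)\<close>, the element \<open>(\<Sum> c\<^sub>j) / N\<close> of \<open>F\<close> becomes a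
  combination of \<open>w / N\<close> and the \<open>c\<^sub>j\<close> with coefficients in \<open>\<M>\<close>.\<close>
lemma rv_equiv_perturbations_descend:
  fixes c y :: "nat \<Rightarrow> 'a" and d :: nat
  assumes F: "subfield F" and N: "N \<ge> 1"
    and y: "\<forall>j\<in>{1..d}. c j \<in> F \<and> rv_equiv N (c j) (y j)"
    and w: "w \<in> F" and \<mu>: "\<mu> \<in> \<M>" and sum_y: "(\<Sum>j = 1..d. y j) = w * \<mu>"
  shows "\<exists>y'. (\<forall>j\<in>{1..d}. y' j \<in> F \<and> rv_equiv N (c j) (y' j)) \<and>
    (\<exists>\<mu>'\<in>\<M>. (\<Sum>j = 1..d. y' j) = w * \<mu>')"
proof -
  define n :: 'a where "n = of_nat N"
  have n: "n \<noteq> 0" "n \<in> F"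
    using N F by (auto simp: n_def)
  have "\<forall>j\<in>{1..d}. \<exists>m. m \<in> \<M> \<and> y j = c j * (1 + n * m)"
    using y unfolding n_def rv_equiv_def by auto
  then obtain m where m: "\<forall>j\<in>{1..d}. m j \<in> \<M> \<and> y j = c j * (1 + n * m j)"
    by (rule bchoice[THEN exE])
  define c' where "c' = (\<lambda>j. if j = 0 then w / n else c j)"
  define s where "s = (\<Sum>j = 1..d. c j) / n"
  have s: "s = (\<Sum>j = 0..d. c' j * (if j = 0 then \<mu> else - m j))"
  proof -
    have "(\<Sum>j = 1..d. y j) = (\<Sum>j = 1..d. c j + n * (c j * m j))"
      using m by (intro sum.cong) (auto simp: algebra_simps)
    then have "(\<Sum>j = 1..d. c j) + n * (\<Sum>j = 1..d. c j * m j) = w * \<mu>"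
      unfolding sum_y by (simp add: sum_distrib_left sum.distrib)
    then show ?thesis
      unfolding s_def c'_def sum_atLeast0_atMost_split using n
      by (simp add: field_simps sum_negf)
  qed
  have c': "\<forall>j\<in>{0..d}. c' j \<in> F"
    using F y n w by (auto simp: c'_def)
  have sF: "s \<in> F"
    using F y n by (auto simp: s_def)
  have mM: "\<forall>j\<in>{0..d}. (if j = 0 then \<mu> else - m j) \<in> \<M>"
    using m \<mu> by auto
  obtain m' where m': "\<forall>j\<in>{0..d}. m' j \<in> F \<inter> \<M>"
    and s_eq: "s = (\<Sum>j = 0..d. c' j * m' j)"
    using maxid_combination_descends[OF F finite_atLeastAtMost c' sF mM s] by blast
  define y' where "y' = (\<lambda>j. c j * (1 + n * - m' j))"
  have "y' j \<in> F \<and> rv_equiv N (c j) (y' j)" if "j \<in> {1..d}" for j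
  proof
    have "c j \<in> F" "m' j \<in> F" "m' j \<in> \<M>"
      using y m' that by auto
    then show "y' j \<in> F"
      unfolding y'_def using F n by (intro subfield_mult subfield_add subfield_uminus) auto
    show "rv_equiv N (c j) (y' j)"
      unfolding y'_def n_def using \<open>m' j \<in> \<M>\<close> by (intro rv_equivI[of "- m' j"]) auto
  qed
  moreover have "(\<Sum>j = 1..d. y' j) = w * m' 0"
    using s_eq n unfolding y'_def s_def c'_def sum_atLeast0_atMost_split
    by (simp add: sum_distrib_left sum.distrib algebra_simps field_simps sum_subtractf)
  ultimately show ?thesis
    using m' by (intro exI[of _ y'] conjI ballI bexI[of _ "m' 0"]) auto
qed

lemma derivative_condition_descends:
  assumes F: "subfield F" and N: "N \<ge> 1" and a: "\<forall>i\<le>d. a i \<in> F" and x: "x \<in> F"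
    and cond: "derivative_condition F N d a x"
  shows "derivative_condition UNIV N d a x"
  unfolding derivative_condition_def
proof (intro allI impI ballI, rule ccontr)
  fix y i
  assume y: "\<forall>i\<in>{1..d}. y i \<in> UNIV \<and> rv_equiv N (of_nat i * a i * x ^ (i - 1)) (y i)"
    and i: "i \<in> {1..d}"
    and not_le: "\<not> val_le OL (\<Sum>j = 1..d. y j) (of_nat N * (a i * x ^ (i - 1)))"
  define w where "w = of_nat N * (a i * x ^ (i - 1))"
  have w: "w \<noteq> 0" "w \<in> F"
    using not_le F a x i unfolding w_def not_val_le_iff
    by (auto intro!: subfield_mult subfield_power)
  have terms: "\<forall>j\<in>{1..d}. of_nat j * a j * x ^ (j - 1) \<in> F \<and>
      rv_equiv N (of_nat j * a j * x ^ (j - 1)) (y j)"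
    using y F a x by (auto intro!: subfield_mult subfield_power)
  have "(\<Sum>j = 1..d. y j) = w * ((\<Sum>j = 1..d. y j) / w)" "(\<Sum>j = 1..d. y j) / w \<in> \<M>"
    using not_le w unfolding w_def not_val_le_iff by auto
  then obtain y' \<mu>' where
      y': "\<forall>j\<in>{1..d}. y' j \<in> F \<and> rv_equiv N (of_nat j * a j * x ^ (j - 1)) (y' j)"
    and "\<mu>' \<in> \<M>" "(\<Sum>j = 1..d. y' j) = w * \<mu>'"
    using rv_equiv_perturbations_descend[OF F N terms w(2)] by blast
  then have "\<not> val_le OL (\<Sum>j = 1..d. y' j) w"
    using w unfolding not_val_le_iff by simp
  moreover have "val_le OL (\<Sum>j = 1..d. y' j) w"
    using cond y' i unfolding derivative_condition_def w_def by blast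
  ultimately show False
    by blast
qed

lemma rv_oplus_witnesses_descend:
  assumes F: "subfield F" and N: "N \<ge> 1" and a: "a1 \<in> F" "a2 \<in> F" "a3 \<in> F"
    and y: "rv_equiv N a1 y1" "rv_equiv N a2 y2" "rv_equiv N a3 y3" "y1 + y2 = y3"
  shows "\<exists>y1\<in>F. \<exists>y2\<in>F. \<exists>y3\<in>F. rv_equiv N a1 y1 \<and> rv_equiv N a2 y2 \<and> rv_equiv N a3 y3 \<and> y1 + y2 = y3"
proof -
  define c where "c = (\<lambda>j::nat. if j = 1 then a1 else if j = 2 then a2 else - a3)"
  define z where "z = (\<lambda>j::nat. if j = 1 then y1 else if j = 2 then y2 else - y3)"
  have sum3: "(\<Sum>j = 1..3. f j) = f 1 + f 2 + f 3" for f :: "nat \<Rightarrow> 'a"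
    by (simp add: numeral_3_eq_3 numeral_2_eq_2)
  have "\<forall>j\<in>{1..3}. c j \<in> F \<and> rv_equiv N (c j) (z j)"
    using F a y rv_equiv_mult_left[of N a3 y3 "- 1"] by (auto simp: c_def z_def)
  moreover have "(\<Sum>j = 1..3. z j) = 0 * 0"
    using y(4) unfolding sum3 z_def by simp
  ultimately obtain z' where z': "\<forall>j\<in>{1..3}. z' j \<in> F \<and> rv_equiv N (c j) (z' j)"
    and "\<exists>\<mu>'\<in>\<M>. (\<Sum>j = 1..3. z' j) = 0 * \<mu>'"
    using rv_equiv_perturbations_descend[OF F N, of 3 c z 0 0] F by auto
  then have "z' 1 + z' 2 = - z' 3"
    unfolding sum3 by (simp add: add_eq_0_iff)
  moreover have z'1: "z' 1 \<in> F" "rv_equiv N a1 (z' 1)"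
    and z'2: "z' 2 \<in> F" "rv_equiv N a2 (z' 2)"
    and z'3: "z' 3 \<in> F" "rv_equiv N (- a3) (z' 3)"
    using z'[rule_format, of 1] z'[rule_format, of 2] z'[rule_format, of 3] by (auto simp: c_def)
  moreover have "- z' 3 \<in> F" "rv_equiv N a3 (- z' 3)"
    using F z'3(1) rv_equiv_mult_left[OF z'3(2), of "- 1"] by auto
  ultimately show ?thesis
    by (intro bexI[of _ "z' 1"] bexI[of _ "z' 2"] bexI[of _ "- z' 3"] conjI)
qed

end

section \<open>The induced map \<open>RV\<^sub>N\<^sub>,\<^sub>K \<rightarrow> RV\<^sub>N\<^sub>,\<^sub>L\<close>\<close>

locale valued_subfield = valued_field +
  fixes K :: "'a set"
  assumes subfield_K: "subfield K"
begin

lemma rv_incl_rv: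
  assumes N: "N \<ge> 1" and x: "x \<in> K"
  shows "rv_incl K OL N (rv K (K \<inter> OL) N x) = rv UNIV OL N x"
proof -
  let ?P = "\<lambda>x'. x' \<in> K \<and> rv K (K \<inter> OL) N x' = rv K (K \<inter> OL) N x"
  have "?P (SOME x'. ?P x')"
    by (rule someI[where P = ?P and x = x]) (simp add: x)
  then have "rv_equiv N (SOME x'. ?P x') x"
    using rv_subfield_eq_iff[OF subfield_K N _ x] by blast
  then show ?thesis
    unfolding rv_incl_def using rv_UNIV_eq_iff[OF N] by simp
qed

lemma rv_K_eq_iff_rv_UNIV_eq:
  "N \<ge> 1 \<Longrightarrow> x \<in> K \<Longrightarrow> y \<in> K \<Longrightarrow>
    rv K (K \<inter> OL) N x = rv K (K \<inter> OL) N y \<longleftrightarrow> rv UNIV OL N x = rv UNIV OL N y"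
  using rv_subfield_eq_iff[OF subfield_K] rv_UNIV_eq_iff by simp

lemma inj_on_rv_incl: "N \<ge> 1 \<Longrightarrow> inj_on (rv_incl K OL N) (RV K (K \<inter> OL) N)"
  by (rule inj_onI, elim RV_E) (simp add: rv_incl_rv rv_K_eq_iff_rv_UNIV_eq)

lemma rv_incl_RV: "N \<ge> 1 \<Longrightarrow> rv_incl K OL N ` RV K (K \<inter> OL) N \<subseteq> RV UNIV OL N"
  by (auto simp: RV_def rv_incl_rv)

lemma rv_mult_graph_rv_incl_iff:
  assumes N: "N \<ge> 1" and "\<xi> \<in> RV K (K \<inter> OL) N" "\<eta> \<in> RV K (K \<inter> OL) N" "\<zeta> \<in> RV K (K \<inter> OL) N"
  shows "rv_mult_graph K (K \<inter> OL) N \<xi> \<eta> \<zeta> \<longleftrightarrow>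
    rv_mult_graph UNIV OL N (rv_incl K OL N \<xi>) (rv_incl K OL N \<eta>) (rv_incl K OL N \<zeta>)"
proof -
  obtain a b c where "a \<in> K" "b \<in> K" "c \<in> K"
    and "\<xi> = rv K (K \<inter> OL) N a" "\<eta> = rv K (K \<inter> OL) N b" "\<zeta> = rv K (K \<inter> OL) N c"
    using assms(2-4) by (meson RV_E)
  then show ?thesis
    using rv_mult_graph_subfield_iff[OF subfield_K N] rv_mult_graph_subfield_iff[OF subfield_UNIV N]
    by (simp add: rv_incl_rv[OF N])
qed

lemma rv_dvd_rv_incl_iff:
  assumes N: "N \<ge> 1" and "\<xi> \<in> RV K (K \<inter> OL) N" "\<eta> \<in> RV K (K \<inter> OL) N"
  shows "rv_dvd K (K \<inter> OL) N \<xi> \<eta> \<longleftrightarrow> rv_dvd UNIV OL N (rv_incl K OL N \<xi>) (rv_incl K OL N \<eta>)"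
proof -
  obtain a b where "a \<in> K" "b \<in> K" "\<xi> = rv K (K \<inter> OL) N a" "\<eta> = rv K (K \<inter> OL) N b"
    using assms(2,3) by (meson RV_E)
  then show ?thesis
    using rv_dvd_subfield_iff[OF subfield_K N] rv_dvd_subfield_iff[OF subfield_UNIV N]
    by (simp add: rv_incl_rv[OF N])
qed

lemma rv_NM_graph_rv_incl_iff:
  assumes N: "N \<ge> 1" and M: "M \<ge> 1" "N dvd M"
    and "\<eta> \<in> RV K (K \<inter> OL) M" "\<xi> \<in> RV K (K \<inter> OL) N"
  shows "rv_NM_graph K (K \<inter> OL) N M \<eta> \<xi> \<longleftrightarrow>
    rv_NM_graph UNIV OL N M (rv_incl K OL M \<eta>) (rv_incl K OL N \<xi>)"
proof -
  obtain a b where "a \<in> K" "b \<in> K" "\<eta> = rv K (K \<inter> OL) M a" "\<xi> = rv K (K \<inter> OL) N b"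
    using assms(4,5) by (meson RV_E)
  then show ?thesis
    using rv_NM_graph_subfield_iff[OF subfield_K N M(2,1)]
      rv_NM_graph_subfield_iff[OF subfield_UNIV N M(2,1)]
    by (simp add: rv_incl_rv[OF N] rv_incl_rv[OF M(1)])
qed

lemma rv_oplus_rv_incl_iff:
  assumes N: "N \<ge> 1"
    and "\<xi>1 \<in> RV K (K \<inter> OL) N" "\<xi>2 \<in> RV K (K \<inter> OL) N" "\<xi>3 \<in> RV K (K \<inter> OL) N"
  shows "rv_oplus K (K \<inter> OL) N \<xi>1 \<xi>2 \<xi>3 \<longleftrightarrow>
    rv_oplus UNIV OL N (rv_incl K OL N \<xi>1) (rv_incl K OL N \<xi>2) (rv_incl K OL N \<xi>3)"
proof -
  obtain a1 a2 a3 where a: "a1 \<in> K" "a2 \<in> K" "a3 \<in> K"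
    and \<xi>: "\<xi>1 = rv K (K \<inter> OL) N a1" "\<xi>2 = rv K (K \<inter> OL) N a2" "\<xi>3 = rv K (K \<inter> OL) N a3"
    using assms(2-4) by (meson RV_E)
  have "(\<exists>y1\<in>K. \<exists>y2\<in>K. \<exists>y3\<in>K. rv_equiv N a1 y1 \<and> rv_equiv N a2 y2 \<and> rv_equiv N a3 y3 \<and> y1 + y2 = y3)
    \<longleftrightarrow> (\<exists>y1 y2 y3. rv_equiv N a1 y1 \<and> rv_equiv N a2 y2 \<and> rv_equiv N a3 y3 \<and> y1 + y2 = y3)"
    using rv_oplus_witnesses_descend[OF subfield_K N a] by blast
  then show ?thesis
    using rv_oplus_subfield_iff[OF subfield_K N a]
      rv_oplus_subfield_iff[OF subfield_UNIV N, of a1 a2 a3]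
    by (simp add: \<xi> rv_incl_rv[OF N] a)
qed

end

section \<open>Hensel's lemma in \<open>K\<close> and condition (ii)\<close>

lemma sum_power_one_plus_expand:
  fixes E :: "nat \<Rightarrow> 'a::comm_ring_1"
  shows "(\<Sum>i = 0..d. E i * (1 + z) ^ i) =
    (\<Sum>k = 0..d. (\<Sum>i = 0..d. of_nat (i choose k) * E i) * z ^ k)"
proof -
  have binomial: "(1 + z) ^ i = (\<Sum>k = 0..d. of_nat (i choose k) * z ^ k)" if "i \<le> d" for i
  proof -
    have "(1 + z) ^ i = (\<Sum>k = 0..i. of_nat (i choose k) * z ^ k)"
      using binomial_ring[of z 1 i] by (simp add: atLeast0AtMost add.commute)
    also have "\<dots> = (\<Sum>k = 0..d. of_nat (i choose k) * z ^ k)"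
      using that by (intro sum.mono_neutral_left) (auto simp: binomial_eq_0)
    finally show ?thesis .
  qed
  have "(\<Sum>i = 0..d. E i * (1 + z) ^ i) =
      (\<Sum>i = 0..d. \<Sum>k = 0..d. E i * (of_nat (i choose k) * z ^ k))"
    using binomial by (simp add: sum_distrib_left)
  also have "\<dots> = (\<Sum>k = 0..d. (\<Sum>i = 0..d. of_nat (i choose k) * E i) * z ^ k)"
    by (subst sum.swap) (simp add: sum_distrib_left sum_distrib_right mult_ac)
  finally show ?thesis .
qed

locale henselian_subfield = valued_subfield +
  assumes henselian_K: "henselian K (K \<inter> OL)"
begin

lemma henselian_root_near_one_poly:
  assumes coeffs: "\<forall>i. coeff p i \<in> K \<inter> OL" and monic: "lead_coeff p = 1"
    and at_1: "poly p 1 \<in> \<M>" and deriv_at_1: "poly (pderiv p) 1 \<notin> \<M>"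
  obtains W where "W \<in> K" "W - 1 \<in> \<M>" "poly p W = 0"
proof -
  have "poly p 1 \<in> K"
    unfolding poly_altdef using coeffs subfield_K by (intro subfield_sum) auto
  then have "poly p 1 \<in> maxid K (K \<inter> OL)" "poly (pderiv p) 1 \<notin> maxid K (K \<inter> OL)"
    using at_1 deriv_at_1 maxid_subfield[OF subfield_K] by auto
  moreover have "1 \<in> K \<inter> OL"
    using subfield_K by simp
  ultimately obtain W where "W \<in> K \<inter> OL" "poly p W = 0" "W - 1 \<in> maxid K (K \<inter> OL)"
    using henselian_K[unfolded henselian_def, rule_format, of p 1] coeffs monic by blast
  then show ?thesis
    using that maxid_subfield[OF subfield_K] by auto
qed

lemma henselian_root_near_one:
  fixes e :: "nat \<Rightarrow> 'a"
  assumes n: "n \<ge> 1" and e0: "e 0 = 1" and e1: "e 1 = - 1" and e: "\<forall>k\<in>{2..n}. e k \<in> K \<inter> \<M>"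
  shows "\<exists>W\<in>K. W - 1 \<in> \<M> \<and> (\<Sum>k = 0..n. e k * W ^ (n - k)) = 0"
proof -
  have split: "(\<Sum>k = 0..n. f k) = f 0 + f 1 + (\<Sum>k = 2..n. f k)" for f :: "nat \<Rightarrow> 'a"
  proof -
    have "{0..n} = insert 0 (insert 1 {2..n})"
      using n by auto
    then show ?thesis
      by (simp add: add.assoc)
  qed
  have e_KO: "e k \<in> K \<inter> OL" if k: "k \<le> n" for k
  proof -
    consider "k = 0" | "k = 1" | "k \<in> {2..n}"
      using k by force
    then show ?thesis
      using e e0 e1 subfield_uminus[OF subfield_K, of 1] subfield_K by cases auto
  qed
  define H where "H = (\<Sum>k = 0..n. monom (e k) (n - k))"
  have coeff_H: "coeff H i = (\<Sum>k = 0..n. if n - k = i then e k else 0)" for i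
    unfolding H_def coeff_sum by (simp add: eq_commute)
  have "coeff H i \<in> K \<inter> OL" for i
    unfolding coeff_H using e_KO subfield_K by (intro IntI subfield_sum OL_sum) auto
  moreover have "lead_coeff H = 1"
  proof -
    have "coeff H n = (\<Sum>k = 0..n. if k = 0 then e k else 0)"
      unfolding coeff_H using n by (intro sum.cong) auto
    also have "\<dots> = 1"
      using e0 by (simp add: sum.delta)
    finally have "coeff H n = 1" .
    moreover have "degree H \<le> n"
      unfolding H_def by (rule degree_sum_le) (auto intro: order.trans[OF degree_monom_le])
    ultimately show ?thesis
      using le_degree[of H n] by simp
  qed
  moreover have poly_H: "poly H x = (\<Sum>k = 0..n. e k * x ^ (n - k))" for x
    unfolding H_def poly_sum poly_monom ..
  moreover have "poly H 1 \<in> \<M>"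
    unfolding poly_H split using e e0 e1 by (auto intro!: maxid_sum)
  moreover have "poly (pderiv H) 1 \<notin> \<M>"
  proof -
    have "pderiv H = (\<Sum>k = 0..n. monom (of_nat (n - k) * e k) (n - k - 1))"
      unfolding H_def using higher_pderiv_sum[of 1 "\<lambda>k. monom (e k) (n - k)" "{0..n}"]
      by (simp add: pderiv_monom del: of_nat_diff)
    then have "poly (pderiv H) 1 = 1 + (\<Sum>k = 2..n. of_nat (n - k) * e k)"
      using e0 e1 n by (simp add: poly_sum poly_monom split of_nat_diff algebra_simps)
    moreover have "(\<Sum>k = 2..n. of_nat (n - k) * e k) \<in> \<M>"
      using e by (auto intro!: maxid_sum maxid_mult_left)
    ultimately show ?thesis
      using one_plus_maxid_notin_maxid by auto
  qed
  ultimately show ?thesis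
    by (metis henselian_root_near_one_poly)
qed

text \<open>Substituting \<open>t = - c\<^sub>0 / W\<close> turns the equation into a monic one in \<open>W\<close> with a simple
  root near \<open>1\<close>.\<close>
lemma henselian_root_in_maxid:
  assumes n: "n \<ge> 1" and c: "\<forall>k\<le>n. c k \<in> K \<inter> OL" and c0: "c 0 \<in> \<M>" and c1: "c 1 = 1"
  shows "\<exists>t\<in>K \<inter> \<M>. (\<Sum>k = 0..n. c k * t ^ k) = 0"
proof (cases "c 0 = 0")
  case True
  then show ?thesis
    using subfield_K by (intro bexI[of _ 0]) (auto simp: sum_atLeast0_atMost_split)
next
  case False
  define e where "e k = c k * (- c 0) ^ k / c 0" for k
  have "e 0 = 1" "e 1 = - 1"
    using False c1 by (auto simp: e_def)
  moreover have "e k \<in> K \<inter> \<M>" if k: "k \<in> {2..n}" for k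
  proof -
    have "e k = - c k * (- c 0) ^ (k - 1)"
      using False k by (cases k) (auto simp: e_def)
    also have "\<dots> \<in> \<M>"
      using c c0 k by (intro maxid_mult_left maxid_power maxid_uminus OL_uminus) auto
    finally have "e k \<in> \<M>" .
    moreover have "e k \<in> K"
      using c k subfield_K unfolding e_def
      by (intro subfield_divide subfield_mult subfield_power subfield_uminus) auto
    ultimately show ?thesis
      by simp
  qed
  ultimately obtain W where W: "W \<in> K" "W - 1 \<in> \<M>" "(\<Sum>k = 0..n. e k * W ^ (n - k)) = 0"
    using henselian_root_near_one[OF n] by blast
  have W_unit: "W \<noteq> 0" "inverse W \<in> OL"
    using one_plus_maxid_nonzero[OF W(2)] inverse_one_plus_maxid[OF W(2)] by simp_all
  define t where "t = - c 0 / W"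
  have "(\<Sum>k = 0..n. c k * t ^ k) = c 0 / W ^ n * (\<Sum>k = 0..n. e k * W ^ (n - k))"
    unfolding sum_distrib_left
  proof (rule sum.cong)
    fix k
    assume "k \<in> {0..n}"
    then have "W ^ n = W ^ (n - k) * W ^ k"
      by (simp flip: power_add)
    moreover have "W ^ k * (- (c 0 / W)) ^ k = (- c 0) ^ k"
      unfolding power_mult_distrib[symmetric] using W_unit by simp
    ultimately show "c k * t ^ k = c 0 / W ^ n * (e k * W ^ (n - k))"
      using False W_unit unfolding t_def e_def by (simp add: field_simps power_divide)
  qed simp
  then have "(\<Sum>k = 0..n. c k * t ^ k) = 0"
    using W(3) by simp
  moreover have "t \<in> \<M>"
    unfolding t_def divide_inverse using c0 W_unit by (intro maxid_mult_right maxid_uminus)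
  moreover have "t \<in> K"
    unfolding t_def using c W(1) subfield_K by (intro subfield_divide subfield_uminus) auto
  ultimately show ?thesis
    by blast
qed

text \<open>With \<open>f(X) = \<Sum> E\<^sub>i X\<^sup>i\<close> and \<open>D = f'(1)\<close>, the rescaled Taylor expansion
  \<open>g(t) = f(1 + N t) / (N D)\<close> has \<open>g'(0) = 1\<close> and integral coefficients thanks to the bound on
  \<open>N e / D\<close>, and \<open>g(0) \<in> \<M>\<close> because \<open>g(\<mu>) \<in> \<M>\<close>.\<close>
lemma henselian_root_taylor:
  fixes E :: "nat \<Rightarrow> 'a" and d :: nat
  defines "D \<equiv> (\<Sum>i = 1..d. of_nat i * E i)"
  assumes N: "N \<ge> 1" and E: "\<forall>i\<le>d. E i \<in> K" and e: "e \<noteq> 0" "\<forall>i\<le>d. E i / e \<in> OL"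
    and D: "D \<noteq> 0" "of_nat N * e / D \<in> OL" and \<mu>: "\<mu> \<in> \<M>" and \<nu>: "\<nu> \<in> \<M>"
    and f_\<mu>: "(\<Sum>i = 0..d. E i * (1 + of_nat N * \<mu>) ^ i) = of_nat N ^ 2 * e * \<nu>"
  shows "\<exists>t\<in>K \<inter> \<M>. (\<Sum>i = 0..d. E i * (1 + of_nat N * t) ^ i) = 0"
proof -
  define n :: 'a where "n = of_nat N"
  have n: "n \<noteq> 0" "n \<in> K"
    using N subfield_K by (auto simp: n_def)
  define P where "P k = (\<Sum>i = 0..d. of_nat (i choose k) * E i)" for k
  define c where "c k = n ^ k * P k / (n * D)" for k
  have expand: "(\<Sum>i = 0..d. E i * (1 + n * t) ^ i) = n * D * (\<Sum>k = 0..d. c k * t ^ k)" for t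
  proof -
    have "(\<Sum>i = 0..d. E i * (1 + n * t) ^ i) = (\<Sum>k = 0..d. P k * (n * t) ^ k)"
      unfolding P_def by (rule sum_power_one_plus_expand)
    also have "\<dots> = n * D * (\<Sum>k = 0..d. c k * t ^ k)"
      unfolding sum_distrib_left c_def using n D by (intro sum.cong) (auto simp: power_mult_distrib)
    finally show ?thesis .
  qed
  have "P 1 = D"
    unfolding P_def D_def sum_atLeast0_atMost_split by simp
  then have c1: "c 1 = 1"
    using n D by (simp add: c_def)
  have P_e: "P k / e \<in> OL" for k
    unfolding P_def sum_divide_distrib using e
    by (auto intro!: OL_sum OL_mult simp flip: times_divide_eq_right)
  have c_OL: "c k \<in> OL" if "k \<ge> 1" for k
  proof (cases "k = 1")
    case False
    with that have "c k = n ^ (k - 2) * (P k / e) * (n * e / D)"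
      using n e by (auto simp: c_def field_simps power_eq_if)
    also have "\<dots> \<in> OL"
      using P_e D(2) unfolding n_def by (intro OL_mult OL_power OL_of_nat)
    finally show ?thesis .
  qed (use c1 in simp)
  have "(\<Sum>k = 0..d. c k * \<mu> ^ k) = n * e / D * \<nu>"
    using expand[of \<mu>] f_\<mu> n D by (simp add: n_def field_simps power2_eq_square)
  then have "c 0 = n * e / D * \<nu> - (\<Sum>k = 1..d. c k * \<mu> ^ k)"
    unfolding sum_atLeast0_atMost_split by (simp add: eq_diff_eq)
  also have "\<dots> \<in> \<M>"
    using D(2) \<nu> c_OL \<mu>
    by (intro maxid_diff maxid_mult_left maxid_sum maxid_power) (auto simp: n_def)
  finally have c0: "c 0 \<in> \<M>" .
  have "c k \<in> K" for k
    unfolding c_def P_def D_def using subfield_K E n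
    by (intro subfield_divide subfield_mult subfield_power subfield_sum subfield_of_nat) auto
  moreover have "c k \<in> OL" for k
    using c0 c_OL[of k] by (cases "k = 0") auto
  ultimately have "\<forall>k\<le>d. c k \<in> K \<inter> OL"
    by blast
  moreover have "d \<ge> 1"
    using D(1) by (cases d) (auto simp: D_def)
  ultimately obtain t where "t \<in> K \<inter> \<M>" "(\<Sum>k = 0..d. c k * t ^ k) = 0"
    using henselian_root_in_maxid[of d c] c0 c1 by blast
  then show ?thesis
    using expand[of t] by (auto simp: n_def)
qed

lemma henselian_root_of_perturbed_root:
  fixes E m :: "nat \<Rightarrow> 'a" and d :: nat
  defines "D \<equiv> (\<Sum>i = 1..d. of_nat i * E i)"
  assumes N: "N \<ge> 1" and E: "\<forall>i\<le>d. E i \<in> K"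
    and k: "k \<in> {1..d}" "E k \<noteq> 0" "\<forall>j\<in>{1..d}. E j / E k \<in> OL"
    and D: "D \<noteq> 0" "of_nat N * E k / D \<in> OL" and \<mu>: "\<mu> \<in> \<M>" and m: "\<forall>i\<le>d. m i \<in> \<M>"
    and root: "(\<Sum>i = 0..d. E i * (1 + of_nat N * \<mu>) ^ i * (1 + of_nat N ^ 2 * m i)) = 0"
  shows "\<exists>t\<in>K \<inter> \<M>. (\<Sum>i = 0..d. E i * (1 + of_nat N * t) ^ i) = 0"
proof -
  define n :: 'a where "n = of_nat N"
  define u where "u = 1 + n * \<mu>"
  have u: "u \<in> OL"
    unfolding u_def n_def using \<mu> by (intro OL_add OL_mult) auto
  have unit: "1 + n\<^sup>2 * m i \<in> OL" "1 + n\<^sup>2 * m i \<noteq> 0" "inverse (1 + n\<^sup>2 * m i) \<in> OL"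
    if "i \<le> d" for i
  proof -
    have "n\<^sup>2 * m i \<in> \<M>"
      unfolding n_def using m that by (intro maxid_mult_left OL_power) auto
    then show "1 + n\<^sup>2 * m i \<in> OL" "1 + n\<^sup>2 * m i \<noteq> 0" "inverse (1 + n\<^sup>2 * m i) \<in> OL"
      using one_plus_maxid_nonzero inverse_one_plus_maxid by auto
  qed
  have "E 0 / E k \<in> OL"
    using root k(3) u unit unfolding u_def n_def
    by (intro vanishing_sum_first_summand_bounded[where w = "\<lambda>i. (1 + n * \<mu>) ^ i * (1 + n\<^sup>2 * m i)"])
      (auto simp: n_def mult.assoc intro!: OL_mult OL_power)
  then have E_e: "\<forall>i\<le>d. E i / E k \<in> OL"
    using k by (auto simp: not_less_eq_eq)
  define \<nu> where "\<nu> = - (\<Sum>i = 0..d. E i / E k * u ^ i * m i)"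
  have \<nu>: "\<nu> \<in> \<M>"
    unfolding \<nu>_def using E_e u m
    by (intro maxid_uminus maxid_sum maxid_mult_left OL_mult OL_power) auto
  have "(\<Sum>i = 0..d. E i * u ^ i) + n\<^sup>2 * (\<Sum>i = 0..d. E i * u ^ i * m i) = 0"
    using root unfolding u_def n_def by (simp add: algebra_simps sum.distrib sum_distrib_left)
  moreover have "(\<Sum>i = 0..d. E i * u ^ i * m i) = E k * (\<Sum>i = 0..d. E i / E k * u ^ i * m i)"
    unfolding sum_distrib_left using k by (intro sum.cong) auto
  ultimately have "(\<Sum>i = 0..d. E i * (1 + of_nat N * \<mu>) ^ i) = of_nat N ^ 2 * E k * \<nu>"
    unfolding \<nu>_def u_def n_def by (simp add: add_eq_0_iff mult.assoc)
  then show ?thesis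
    using henselian_root_taylor[OF N E k(2) E_e _ _ \<mu> \<nu>] D unfolding D_def by blast
qed

lemma root_condition_lifts:
  assumes N: "N \<ge> 1" and b: "b \<in> K" "b \<noteq> 0" and \<alpha>: "\<forall>i\<le>d. \<alpha> i \<in> K"
    and deriv: "derivative_condition UNIV N d \<alpha> b"
    and x: "rv_equiv N b x" and root: "root_condition UNIV N d \<alpha> x"
  shows "\<exists>x'\<in>K. rv_equiv N b x' \<and> (\<Sum>i = 0..d. \<alpha> i * x' ^ i) = 0"
proof -
  define n :: 'a where "n = of_nat N"
  obtain \<mu> where \<mu>: "\<mu> \<in> \<M>" "x = b * (1 + n * \<mu>)"
    using x unfolding n_def by (rule rv_equivE)
  obtain m where m: "\<forall>i\<le>d. m i \<in> \<M>" and root_m: "(\<Sum>i = 0..d. \<alpha> i * x ^ i * (1 + n ^ 2 * m i)) = 0"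
    using root unfolding n_def by (rule root_conditionE)
  define E where "E i = \<alpha> i * b ^ i" for i
  have E: "\<forall>i\<le>d. E i \<in> K"
    unfolding E_def using \<alpha> b subfield_K by (auto intro!: subfield_mult subfield_power)
  have root_E: "(\<Sum>i = 0..d. E i * (1 + n * \<mu>) ^ i * (1 + n ^ 2 * m i)) = 0"
    using root_m unfolding \<mu>(2) E_def by (simp add: power_mult_distrib mult_ac)
  obtain t where t: "t \<in> K \<inter> \<M>" "(\<Sum>i = 0..d. E i * (1 + n * t) ^ i) = 0"
  proof (cases "\<forall>i\<in>{1..d}. E i = 0")
    case True
    have "1 + n ^ 2 * m 0 \<noteq> 0"
      using m unfolding n_def by (intro one_plus_maxid_nonzero maxid_mult_left) auto
    then have "E 0 = 0"
      using root_E True by (simp add: sum_atLeast0_atMost_split)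
    then show ?thesis
      using that[of 0] True subfield_K by (simp add: sum_atLeast0_atMost_split)
  next
    case False
    then obtain k where k: "k \<in> {1..d}" "E k \<noteq> 0" "\<forall>j\<in>{1..d}. E j / E k \<in> OL"
      using ex_min_valuation[of "{1..d}" E] by auto
    define S where "S = (\<Sum>j = 1..d. of_nat j * \<alpha> j * b ^ (j - 1))"
    have "(\<Sum>i = 1..d. of_nat i * E i) = b * S"
      unfolding S_def sum_distrib_left E_def by (intro sum.cong) (auto simp: power_eq_if)
    moreover have "val_le OL S (n * (\<alpha> k * b ^ (k - 1)))"
      using deriv k(1) unfolding derivative_condition_def S_def n_def by auto
    moreover have "n * (\<alpha> k * b ^ (k - 1)) = n * E k / b"
      using k b unfolding E_def by (auto simp: power_eq_if)
    ultimately have "(\<Sum>i = 1..d. of_nat i * E i) \<noteq> 0" "n * E k / (\<Sum>i = 1..d. of_nat i * E i) \<in> OL"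
      using k b N unfolding E_def n_def by (auto simp: val_le_def)
    then show ?thesis
      using henselian_root_of_perturbed_root[OF N E k _ _ \<mu>(1) m] root_E that
      unfolding n_def by blast
  qed
  have "b * (1 + n * t) \<in> K"
    using b t subfield_K unfolding n_def by (intro subfield_mult subfield_add) auto
  moreover have "rv_equiv N b (b * (1 + n * t))"
    using t unfolding n_def by (intro rv_equivI[of t]) auto
  moreover have "(\<Sum>i = 0..d. \<alpha> i * (b * (1 + n * t)) ^ i) = 0"
    using t(2) by (simp add: E_def power_mult_distrib mult.assoc)
  ultimately show ?thesis
    by blast
qed

lemma P_witnessed_transfer:
  assumes N: "N \<ge> 1" and b: "b \<in> K" and \<alpha>: "\<forall>i\<le>d. \<alpha> i \<in> K"
  shows "P_witnessed K N d \<alpha> b \<longleftrightarrow> P_witnessed UNIV N d \<alpha> b"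
proof
  assume "P_witnessed K N d \<alpha> b"
  then obtain a x x' where "b \<noteq> 0" and a: "\<forall>i\<le>d. a i \<in> K \<and> rv_equiv (N\<^sup>2) (\<alpha> i) (a i)"
    and x: "x \<in> K" "rv_equiv N b x" "derivative_condition K N d a x"
    and x': "rv_equiv N b x'" "root_condition K N d a x'"
    unfolding P_witnessed_def by blast
  moreover have "derivative_condition UNIV N d a x"
    using derivative_condition_descends[OF subfield_K N _ x(1) x(3)] a by blast
  moreover have "root_condition UNIV N d a x'"
    using x'(2) unfolding root_condition_def by blast
  ultimately show "P_witnessed UNIV N d \<alpha> b"
    unfolding P_witnessed_def by blast
next
  assume "P_witnessed UNIV N d \<alpha> b"
  then obtain a x x' where b0: "b \<noteq> 0" and a: "\<forall>i\<le>d. rv_equiv (N\<^sup>2) (a i) (\<alpha> i)"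
    and x: "rv_equiv N x b" "derivative_condition UNIV N d a x"
    and x': "rv_equiv N b x'" "root_condition UNIV N d a x'"
    unfolding P_witnessed_def by (meson rv_equiv_sym)
  have deriv: "derivative_condition UNIV N d \<alpha> b"
    using derivative_condition_rv_equiv[OF a x] .
  obtain x'' where x'': "x'' \<in> K" "rv_equiv N b x''" "(\<Sum>i = 0..d. \<alpha> i * x'' ^ i) = 0"
    using root_condition_lifts[OF N b b0 \<alpha> deriv x'(1) root_condition_rv_equiv[OF a x'(2)]] by blast
  have "root_condition K N d \<alpha> x''"
    unfolding root_condition_def using \<alpha> x''(1,3) subfield_K
    by (intro exI[of _ "\<lambda>i. \<alpha> i * x'' ^ i"]) (auto intro!: subfield_mult subfield_power)
  moreover have "derivative_condition K N d \<alpha> b"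
    using derivative_condition_mono[OF subset_UNIV deriv] .
  moreover have "\<forall>i\<le>d. \<alpha> i \<in> K \<and> rv_equiv (N\<^sup>2) (\<alpha> i) (\<alpha> i)"
    using \<alpha> by simp
  ultimately show "P_witnessed K N d \<alpha> b"
    unfolding P_witnessed_def using b b0 x''(1,2) rv_equiv_refl by blast
qed

lemma rv_P_rv_incl_iff:
  assumes N: "N \<ge> 1" and \<xi>: "\<xi> \<in> RV K (K \<inter> OL) N" and \<zeta>: "\<forall>i\<le>d. \<zeta> i \<in> RV K (K \<inter> OL) (N\<^sup>2)"
  shows "rv_P K (K \<inter> OL) N d \<xi> \<zeta> \<longleftrightarrow>
    rv_P UNIV OL N d (rv_incl K OL N \<xi>) (\<lambda>i. rv_incl K OL (N\<^sup>2) (\<zeta> i))"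
proof -
  have N2: "N\<^sup>2 \<ge> 1"
    using N by simp
  obtain b where b: "b \<in> K" "\<xi> = rv K (K \<inter> OL) N b"
    using \<xi> by (rule RV_E)
  have "\<forall>i\<le>d. \<exists>a. a \<in> K \<and> \<zeta> i = rv K (K \<inter> OL) (N\<^sup>2) a"
    using \<zeta> unfolding RV_def by blast
  then obtain \<alpha> where \<alpha>: "\<forall>i\<le>d. \<alpha> i \<in> K \<and> \<zeta> i = rv K (K \<inter> OL) (N\<^sup>2) (\<alpha> i)"
    unfolding choice_iff' by blast
  have "rv_P K (K \<inter> OL) N d \<xi> \<zeta> \<longleftrightarrow> P_witnessed K N d \<alpha> b"
    unfolding b(2) using \<alpha> by (intro rv_P_subfield_iff[OF subfield_K N b(1)]) auto
  also have "\<dots> \<longleftrightarrow> P_witnessed UNIV N d \<alpha> b"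
    using \<alpha> by (intro P_witnessed_transfer[OF N b(1)]) auto
  also have "\<dots> \<longleftrightarrow> rv_P UNIV OL N d (rv UNIV OL N b) (\<lambda>i. rv_incl K OL (N\<^sup>2) (\<zeta> i))"
    using rv_P_subfield_iff[OF subfield_UNIV N, of b d \<alpha>] \<alpha> rv_incl_rv[OF N2] by simp
  finally show ?thesis
    unfolding b(2) rv_incl_rv[OF N b(1)] .
qed

end

theorem proposition3p1:
  fixes K OL :: "'a::field_char_0 set"
  assumes valL: "valuation_ring UNIV OL"
    and henL: "henselian UNIV OL"
    and subK: "subfield K"
    and valK: "valuation_ring K (K \<inter> OL)"
    and henK: "henselian K (K \<inter> OL)"
  shows "\<forall>N::nat. N \<ge> 1 \<longrightarrow>
    (let OK = K \<inter> OL; \<iota> = rv_incl K OL N; \<iota>2 = rv_incl K OL (N^2) in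
      (\<forall>x\<in>K. \<forall>y\<in>K. rv K OK N x = rv K OK N y \<longleftrightarrow> rv UNIV OL N x = rv UNIV OL N y) \<and>
      (\<forall>x\<in>K. \<iota> (rv K OK N x) = rv UNIV OL N x) \<and>
      inj_on \<iota> (RV K OK N) \<and>
      \<iota> ` RV K OK N \<subseteq> RV UNIV OL N \<and>
      \<iota> (rv K OK N 0) = rv UNIV OL N 0 \<and>
      \<iota> (rv K OK N 1) = rv UNIV OL N 1 \<and>
      (\<forall>\<xi>\<in>RV K OK N. \<forall>\<eta>\<in>RV K OK N. \<forall>\<zeta>\<in>RV K OK N.
         rv_mult_graph K OK N \<xi> \<eta> \<zeta> \<longleftrightarrow> rv_mult_graph UNIV OL N (\<iota> \<xi>) (\<iota> \<eta>) (\<iota> \<zeta>)) \<and>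
      (\<forall>\<xi>\<in>RV K OK N. \<forall>\<eta>\<in>RV K OK N.
         rv_dvd K OK N \<xi> \<eta> \<longleftrightarrow> rv_dvd UNIV OL N (\<iota> \<xi>) (\<iota> \<eta>)) \<and>
      (\<forall>\<xi>1\<in>RV K OK N. \<forall>\<xi>2\<in>RV K OK N. \<forall>\<xi>3\<in>RV K OK N.
         rv_oplus K OK N \<xi>1 \<xi>2 \<xi>3 \<longleftrightarrow> rv_oplus UNIV OL N (\<iota> \<xi>1) (\<iota> \<xi>2) (\<iota> \<xi>3)) \<and>
      (\<forall>M::nat. M \<ge> 1 \<and> N dvd M \<longrightarrow>
         (\<forall>\<eta>\<in>RV K OK M. \<forall>\<xi>\<in>RV K OK N.
            rv_NM_graph K OK N M \<eta> \<xi> \<longleftrightarrow> rv_NM_graph UNIV OL N M (rv_incl K OL M \<eta>) (\<iota> \<xi>))) \<and>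
      (\<forall>d::nat. \<forall>\<xi>\<in>RV K OK N. \<forall>\<zeta>::nat \<Rightarrow> 'a set. (\<forall>i\<le>d. \<zeta> i \<in> RV K OK (N^2)) \<longrightarrow>
         (rv_P K OK N d \<xi> \<zeta> \<longleftrightarrow> rv_P UNIV OL N d (\<iota> \<xi>) (\<lambda>i. \<iota>2 (\<zeta> i)))))"
proof -
  interpret henselian_subfield OL K
    using valL subK henK by unfold_locales
  show ?thesis
    unfolding Let_def
    using rv_K_eq_iff_rv_UNIV_eq rv_incl_rv inj_on_rv_incl rv_incl_RV
      rv_mult_graph_rv_incl_iff rv_dvd_rv_incl_iff rv_oplus_rv_incl_iff
      rv_NM_graph_rv_incl_iff rv_P_rv_incl_iff subfield_K
    by simp
qed

end
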